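(* Call a finite union-closed collection of sets containing at least one non-empty set a counterexample if every element of its universe belongs to fewer than half of the sets of the collection. Let $\mathcal{A}$ be a separating, union-closed counterexample such that no counterexample has fewer sets than $\mathcal{A}$. Then $|\mathcal{A}|\ge 4m-1$, where $m=|U(\mathcal{A})|$.
   Context: A collection $\mathcal{A}$ of sets is union-closed if $S,T\in\mathcal{A}$ implies $S\cup T\in\mathcal{A}$. The universe $U(\mathcal{A})$ is $\bigcup_{A\in\mathcal{A}}A$. $\mathcal{A}$ is separating if for any two distinct elements of $U(\mathcal{A})$ there is a set in $\mathcal{A}$ containing one of them but not the other. *)

theory Defs
  imports Main
begin

definition union_closed :: "'a set set \<Rightarrow> bool" where
  "union_closed \<A> \<longleftrightarrow> (\<forall>S\<in>\<A>. \<forall>T\<in>\<A>. S \<union> T \<in> \<A>)"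

definition universe :: "'a set set \<Rightarrow> 'a set" where
  "universe \<A> = \<Union>\<A>"

definition separating :: "'a set set \<Rightarrow> bool" where
  "separating \<A> \<longleftrightarrow>
     (\<forall>x\<in>universe \<A>. \<forall>y\<in>universe \<A>. x \<noteq> y \<longrightarrow>
        (\<exists>S\<in>\<A>. (x \<in> S \<and> y \<notin> S) \<or> (y \<in> S \<and> x \<notin> S)))"

definition counterexample :: "'a set set \<Rightarrow> bool" where
  "counterexample \<A> \<longleftrightarrow>
     finite \<A> \<and> union_closed \<A> \<and> (\<exists>S\<in>\<A>. S \<noteq> {}) \<and>
     (\<forall>x\<in>universe \<A>. 2 * card {S\<in>\<A>. x \<in> S} < card \<A>)"

end

theory Submission
  imports Defs
begin

text \<open>Call \<open>x\<close> maximal if no other element of the universe lies in all sets containing \<open>x\<close>.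
  Let \<open>x\<close> be maximal. The sets avoiding \<open>x\<close> form a smaller union-closed family, so by
  minimality some \<open>y\<close> lies in at least half of them; let \<open>y'\<close> be a maximal element above \<open>y\<close>.
  For every \<open>z\<close>, the union \<open>V z\<close> of all sets avoiding \<open>z\<close> belongs to the family and contains
  every maximal element other than \<open>z\<close>; by separation \<open>z \<mapsto> V z\<close> is injective. Hence the
  universe together with the sets \<open>V z\<close>, \<open>z \<notin> {x, y'}\<close>, are \<open>m - 1\<close> sets containing both
  \<open>x\<close> and \<open>y'\<close>, and counting the sets containing \<open>y'\<close> against the bounds
  \<open>2 |\<A>\<^sub>x| < |\<A>|\<close> and \<open>2 |\<A>\<^sub>y'| < |\<A>|\<close> gives \<open>|\<A>| \<ge> 4m - 1\<close>.\<close>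

lemma card_filter_split:
  assumes "finite A"
  shows "card {a\<in>A. P a} = card {a\<in>A. P a \<and> Q a} + card {a\<in>A. P a \<and> \<not> Q a}"
proof -
  have "{a\<in>A. P a} = {a\<in>A. P a \<and> Q a} \<union> {a\<in>A. P a \<and> \<not> Q a}" by auto
  also have "card \<dots> = card {a\<in>A. P a \<and> Q a} + card {a\<in>A. P a \<and> \<not> Q a}"
    using assms by (intro card_Un_disjoint) auto
  finally show ?thesis .
qed

lemma union_closed_Union_mem:
  assumes "union_closed \<A>" "finite \<B>" "\<B> \<noteq> {}" "\<B> \<subseteq> \<A>"
  shows "\<Union>\<B> \<in> \<A>"
  using assms(2-4)
proof (induction \<B> rule: finite_ne_induct)
  case (singleton S)
  then show ?case by simp
next
  case (insert S \<B>)
  then show ?case using assms(1) unfolding union_closed_def by simp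
qed

lemma separating_eqI:
  assumes "separating \<A>" "x \<in> universe \<A>" "z \<in> universe \<A>"
    and "{S\<in>\<A>. x \<in> S} = {S\<in>\<A>. z \<in> S}"
  shows "x = z"
  using assms unfolding separating_def by blast

definition maximal_element :: "'a set set \<Rightarrow> 'a \<Rightarrow> bool" where
  "maximal_element \<A> x \<longleftrightarrow> x \<in> universe \<A> \<and>
     (\<forall>z\<in>universe \<A>. {S\<in>\<A>. x \<in> S} \<subseteq> {S\<in>\<A>. z \<in> S} \<longrightarrow> z = x)"

lemma maximal_element_above:
  assumes "finite \<A>" "separating \<A>" "y \<in> universe \<A>"
  obtains y' where "maximal_element \<A> y'" "{S\<in>\<A>. y \<in> S} \<subseteq> {S\<in>\<A>. y' \<in> S}"
proof -
  define \<F> where "\<F> = (\<lambda>z. {S\<in>\<A>. z \<in> S}) ` universe \<A>"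
  have "\<F> \<subseteq> Pow \<A>" unfolding \<F>_def by auto
  then have "finite \<F>" using assms(1) by (simp add: finite_subset)
  moreover have "{S\<in>\<A>. y \<in> S} \<in> \<F>" unfolding \<F>_def using assms(3) by (rule imageI)
  ultimately have "\<exists>\<M>\<in>\<F>. {S\<in>\<A>. y \<in> S} \<subseteq> \<M> \<and> (\<forall>\<S>\<in>\<F>. \<M> \<subseteq> \<S> \<longrightarrow> \<M> = \<S>)"
    by (rule finite_has_maximal2)
  then obtain \<M> where "\<M> \<in> \<F>" "{S\<in>\<A>. y \<in> S} \<subseteq> \<M>"
    and maximal: "\<forall>\<S>\<in>\<F>. \<M> \<subseteq> \<S> \<longrightarrow> \<M> = \<S>"
    by blast
  then obtain y' where y'U: "y' \<in> universe \<A>" and \<M>: "\<M> = {S\<in>\<A>. y' \<in> S}"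
    unfolding \<F>_def by blast
  have "maximal_element \<A> y'"
    unfolding maximal_element_def
  proof (intro conjI ballI impI)
    fix z assume z: "z \<in> universe \<A>" "{S\<in>\<A>. y' \<in> S} \<subseteq> {S\<in>\<A>. z \<in> S}"
    have "{S\<in>\<A>. z \<in> S} \<in> \<F>" unfolding \<F>_def using z(1) by (rule imageI)
    then have "{S\<in>\<A>. y' \<in> S} = {S\<in>\<A>. z \<in> S}" using maximal z(2) unfolding \<M> by simp
    then show "z = y'" using separating_eqI[OF assms(2) y'U z(1)] by simp
  qed (rule y'U)
  with \<open>{S\<in>\<A>. y \<in> S} \<subseteq> \<M>\<close> show ?thesis using that unfolding \<M> by simp
qed

definition largest_avoiding :: "'a set set \<Rightarrow> 'a \<Rightarrow> 'a set" where
  "largest_avoiding \<A> z = \<Union>{S\<in>\<A>. z \<notin> S}"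

lemma largest_avoiding_mem:
  assumes "union_closed \<A>" "finite \<A>" "S \<in> \<A>" "z \<notin> S"
  shows "largest_avoiding \<A> z \<in> \<A>"
  unfolding largest_avoiding_def using assms by (intro union_closed_Union_mem) auto

lemma not_mem_largest_avoiding: "z \<notin> largest_avoiding \<A> z"
  unfolding largest_avoiding_def by auto

lemma maximal_element_mem_largest_avoiding:
  assumes "maximal_element \<A> w" "z \<in> universe \<A>" "z \<noteq> w"
  shows "w \<in> largest_avoiding \<A> z"
proof (rule ccontr)
  assume "w \<notin> largest_avoiding \<A> z"
  then have "{S\<in>\<A>. w \<in> S} \<subseteq> {S\<in>\<A>. z \<in> S}" unfolding largest_avoiding_def by auto
  then show False using assms unfolding maximal_element_def by blast
qed

lemma inj_on_largest_avoiding: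
  assumes "separating \<A>"
  shows "inj_on (largest_avoiding \<A>) (universe \<A>)"
proof (rule inj_onI, rule ccontr)
  fix z z' assume "z \<in> universe \<A>" "z' \<in> universe \<A>" "z \<noteq> z'"
    and "largest_avoiding \<A> z = largest_avoiding \<A> z'"
  then show False
    using assms unfolding separating_def largest_avoiding_def by blast
qed

lemma card_universe_le_card_containing_both:
  assumes "finite \<A>" "union_closed \<A>" "separating \<A>" "finite (universe \<A>)"
    and avoided: "\<forall>z\<in>universe \<A>. \<exists>S\<in>\<A>. z \<notin> S"
    and "maximal_element \<A> x" "maximal_element \<A> y" "x \<noteq> y"
  shows "card (universe \<A>) \<le> card {S\<in>\<A>. x \<in> S \<and> y \<in> S} + 1"
proof -
  let ?U = "universe \<A>" and ?V = "largest_avoiding \<A>"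
  have xU: "x \<in> ?U" and yU: "y \<in> ?U"
    using assms(6,7) unfolding maximal_element_def by auto
  define \<G> where "\<G> = insert ?U (?V ` (?U - {x, y}))"
  have "?U \<notin> ?V ` (?U - {x, y})" using not_mem_largest_avoiding by fast
  moreover have "card (?V ` (?U - {x, y})) = card ?U - 2"
    using inj_on_largest_avoiding[OF assms(3)] xU yU assms(4,8)
    by (simp add: card_image inj_on_subset card_Diff_subset)
  moreover have "card ?U \<ge> 2"
    using card_mono[OF assms(4), of "{x, y}"] xU yU assms(8) by simp
  ultimately have "card \<G> = card ?U - 1" using assms(4) unfolding \<G>_def by simp
  moreover have "\<G> \<subseteq> {S\<in>\<A>. x \<in> S \<and> y \<in> S}"
  proof -
    have "?U \<in> \<A>"
      using xU assms(1,2) unfolding universe_def by (intro union_closed_Union_mem) auto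
    moreover have "?V z \<in> {S\<in>\<A>. x \<in> S \<and> y \<in> S}" if "z \<in> ?U - {x, y}" for z
      using that avoided largest_avoiding_mem[OF assms(2,1)]
        maximal_element_mem_largest_avoiding[OF assms(6)]
        maximal_element_mem_largest_avoiding[OF assms(7)] by blast
    ultimately show ?thesis using xU yU unfolding \<G>_def by auto
  qed
  then have "card \<G> \<le> card {S\<in>\<A>. x \<in> S \<and> y \<in> S}"
    using assms(1) by (intro card_mono) auto
  ultimately show ?thesis by linarith
qed

lemma counterexample_avoided:
  assumes "counterexample \<A>" "z \<in> universe \<A>"
  shows "\<exists>S\<in>\<A>. z \<notin> S"
proof (rule ccontr)
  assume "\<not> (\<exists>S\<in>\<A>. z \<notin> S)"
  then have "{S\<in>\<A>. z \<in> S} = \<A>" by blast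
  then show False using assms unfolding counterexample_def by force
qed

lemma minimal_counterexample_avoiding:
  fixes \<A> :: "'a set set"
  assumes "counterexample \<A>" "x \<in> universe \<A>"
    and minimal: "\<And>\<B> :: 'a set set. counterexample \<B> \<Longrightarrow> card \<A> \<le> card \<B>"
  obtains y where "y \<in> universe {S\<in>\<A>. x \<notin> S}"
    "card {S\<in>\<A>. x \<notin> S} \<le> 2 * card {S\<in>\<A>. x \<notin> S \<and> y \<in> S}"
proof -
  let ?\<B> = "{S\<in>\<A>. x \<notin> S}"
  have fin: "finite \<A>" and uc: "union_closed \<A>"
    and freq: "2 * card {S\<in>\<A>. x \<in> S} < card \<A>"
    using assms(1,2) unfolding counterexample_def by auto
  have split: "card \<A> = card {S\<in>\<A>. x \<in> S} + card ?\<B>"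
    using card_filter_split[OF fin, of "\<lambda>_. True" "\<lambda>S. x \<in> S"] by simp
  have "card {S\<in>\<A>. x \<in> S} > 0"
    using assms(2) fin unfolding universe_def by (auto simp: card_gt_0_iff)
  then have smaller: "card ?\<B> < card \<A>" and "card ?\<B> \<ge> 2"
    using split freq by linarith+
  have "\<exists>S\<in>?\<B>. S \<noteq> {}"
  proof (rule ccontr)
    assume "\<not> ?thesis"
    then have "?\<B> \<subseteq> {{}}" by blast
    then have "card ?\<B> \<le> 1" using card_mono[of "{{}}" ?\<B>] by simp
    with \<open>card ?\<B> \<ge> 2\<close> show False by simp
  qed
  moreover have "union_closed ?\<B>" using uc unfolding union_closed_def by auto
  moreover have "\<not> counterexample ?\<B>" using smaller by (auto dest: minimal)
  ultimately show ?thesis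
    using that fin unfolding counterexample_def by (auto simp: not_less)
qed

theorem theorem1:
  fixes \<A> :: "'a set set"
  assumes "counterexample \<A>"
    and "separating \<A>"
    and "\<And>\<B> :: 'a set set. counterexample \<B> \<Longrightarrow> card \<A> \<le> card \<B>"
    and "\<And>\<B> :: nat set set. counterexample \<B> \<Longrightarrow> card \<A> \<le> card \<B>"
  shows "int (card \<A>) \<ge> 4 * int (card (universe \<A>)) - 1"
proof (cases "finite (universe \<A>)")
  case False
  then show ?thesis by simp
next
  case finU: True
  have fin: "finite \<A>" and uc: "union_closed \<A>" and "\<exists>S\<in>\<A>. S \<noteq> {}"
    and freq: "\<forall>z\<in>universe \<A>. 2 * card {S\<in>\<A>. z \<in> S} < card \<A>"
    using assms(1) unfolding counterexample_def by auto
  then obtain u where "u \<in> universe \<A>" unfolding universe_def by auto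
  then obtain x where x: "maximal_element \<A> x"
    using maximal_element_above[OF fin assms(2)] by blast
  then have xU: "x \<in> universe \<A>" unfolding maximal_element_def by simp
  obtain y where y: "y \<in> universe {S\<in>\<A>. x \<notin> S}"
    and half: "card {S\<in>\<A>. x \<notin> S} \<le> 2 * card {S\<in>\<A>. x \<notin> S \<and> y \<in> S}"
    using minimal_counterexample_avoiding[OF assms(1) xU assms(3)] by blast
  have "y \<in> universe \<A>" using y unfolding universe_def by auto
  then obtain y' where y': "maximal_element \<A> y'"
    and above: "{S\<in>\<A>. y \<in> S} \<subseteq> {S\<in>\<A>. y' \<in> S}"
    using maximal_element_above[OF fin assms(2)] by blast
  have y'U: "y' \<in> universe \<A>" using y' unfolding maximal_element_def by simp
  have "y' \<noteq> x" using y above unfolding universe_def by auto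
  have both: "card (universe \<A>) \<le> card {S\<in>\<A>. y' \<in> S \<and> x \<in> S} + 1"
    using card_universe_le_card_containing_both[OF fin uc assms(2) finU _ y' x \<open>y' \<noteq> x\<close>]
      counterexample_avoided[OF assms(1)] by blast
  have "card {S\<in>\<A>. x \<notin> S \<and> y \<in> S} \<le> card {S\<in>\<A>. y' \<in> S \<and> \<not> x \<in> S}"
    using above fin by (intro card_mono) auto
  moreover have "card {S\<in>\<A>. y' \<in> S} =
      card {S\<in>\<A>. y' \<in> S \<and> x \<in> S} + card {S\<in>\<A>. y' \<in> S \<and> \<not> x \<in> S}"
    by (rule card_filter_split[OF fin])
  moreover have "card \<A> = card {S\<in>\<A>. x \<in> S} + card {S\<in>\<A>. x \<notin> S}"
    using card_filter_split[OF fin, of "\<lambda>_. True" "\<lambda>S. x \<in> S"] by simp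
  moreover have "2 * card {S\<in>\<A>. x \<in> S} < card \<A>" "2 * card {S\<in>\<A>. y' \<in> S} < card \<A>"
    using freq xU y'U by auto
  ultimately have "4 * card (universe \<A>) \<le> card \<A> + 1"
    using both half by linarith
  then show ?thesis by linarith
qed

end
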